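(* Let $G$ be a second countable, locally compact, Hausdorff groupoid with a Haar system, and let $G'$ be an open subgroupoid of $G$ with $G^{0}\subseteq G'$. Let $\Delta=G\setminus G'$ and suppose the inclusion is regular, i.e. the map $r:\Delta\to r(\Delta)$ is open when $r(\Delta)$ is given the quotient topology from $r|_{\Delta}$. Let $\Delta^{2}=(\Delta\times\Delta)\cap G^{2}$ and $\mu:G^{2}\to G$ the product. Then $\Delta^{2}\cap\mu^{-1}(G')$ is closed in $\Delta^{2}$.
   Context: $G^{2}\subseteq G\times G$ denotes the set of composable pairs. *)

theory Defs
  imports "HOL-Analysis.Analysis" "HOL-Probability.Probability"
begin

text \<open>A groupoid whose arrows are all elements of the type 'g, given by range map r,
 source (domain) map d, partially defined multiplication m (meaningful on composable
 pairs, i.e. d x = r y) and inverse i.\<close>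

definition composable :: "('g \<Rightarrow> 'g) \<Rightarrow> ('g \<Rightarrow> 'g) \<Rightarrow> ('g \<times> 'g) set" where
  "composable r d = {(x, y). d x = r y}"

definition units :: "('g \<Rightarrow> 'g) \<Rightarrow> 'g set" where
  "units r = range r"

definition groupoid :: "('g \<Rightarrow> 'g) \<Rightarrow> ('g \<Rightarrow> 'g) \<Rightarrow> ('g \<Rightarrow> 'g \<Rightarrow> 'g) \<Rightarrow> ('g \<Rightarrow> 'g) \<Rightarrow> bool" where
  "groupoid r d m i \<longleftrightarrow>
     (\<forall>x. r (r x) = r x \<and> d (r x) = r x \<and> r (d x) = d x \<and> d (d x) = d x) \<and>
     (\<forall>x y. d x = r y \<longrightarrow> r (m x y) = r x \<and> d (m x y) = d y) \<and>
     (\<forall>x y z. d x = r y \<and> d y = r z \<longrightarrow> m (m x y) z = m x (m y z)) \<and>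
     (\<forall>x. m (r x) x = x \<and> m x (d x) = x) \<and>
     (\<forall>x. r (i x) = d x \<and> d (i x) = r x \<and> m x (i x) = r x \<and> m (i x) x = d x)"

definition topological_groupoid ::
  "('g::topological_space \<Rightarrow> 'g) \<Rightarrow> ('g \<Rightarrow> 'g) \<Rightarrow> ('g \<Rightarrow> 'g \<Rightarrow> 'g) \<Rightarrow> ('g \<Rightarrow> 'g) \<Rightarrow> bool" where
  "topological_groupoid r d m i \<longleftrightarrow> groupoid r d m i \<and>
     continuous_on (composable r d) (\<lambda>p. m (fst p) (snd p)) \<and> continuous_on UNIV i"

definition compactly_supported :: "('g::topological_space \<Rightarrow> real) \<Rightarrow> bool" where
  "compactly_supported f \<longleftrightarrow> continuous_on UNIV f \<and> compact (closure {x. f x \<noteq> 0})"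

text \<open>A (left) Haar system: a family of Radon measures lam u (u a unit) on the Borel sets
 of G, with support exactly G^u = r^{-1}(u), continuous and left invariant.\<close>
definition haar_system ::
  "('g::topological_space \<Rightarrow> 'g) \<Rightarrow> ('g \<Rightarrow> 'g) \<Rightarrow> ('g \<Rightarrow> 'g \<Rightarrow> 'g) \<Rightarrow> ('g \<Rightarrow> 'g measure) \<Rightarrow> bool" where
  "haar_system r d m lam \<longleftrightarrow>
     (\<forall>u\<in>units r. sets (lam u) = sets borel) \<and>
     (\<forall>u\<in>units r. \<forall>K. compact K \<longrightarrow> emeasure (lam u) K < \<infinity>) \<and>
     (\<forall>u\<in>units r. \<forall>K. compact K \<longrightarrow>
        emeasure (lam u) K = (INF U\<in>{U. open U \<and> K \<subseteq> U}. emeasure (lam u) U)) \<and>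
     (\<forall>u\<in>units r. \<forall>U. open U \<longrightarrow>
        emeasure (lam u) U = (SUP K\<in>{K. compact K \<and> K \<subseteq> U}. emeasure (lam u) K)) \<and>
     (\<forall>u\<in>units r. \<forall>U. open U \<longrightarrow> (emeasure (lam u) U = 0 \<longleftrightarrow> U \<inter> r -` {u} = {})) \<and>
     (\<forall>f. compactly_supported f \<longrightarrow>
        continuous_on (units r) (\<lambda>u. integral\<^sup>L (lam u) f)) \<and>
     (\<forall>f x. compactly_supported f \<longrightarrow>
        (\<integral>y. f (m x y) \<partial>lam (d x)) = (\<integral>y. f y \<partial>lam (r x)))"

definition subgroupoid ::
  "('g \<Rightarrow> 'g) \<Rightarrow> ('g \<Rightarrow> 'g) \<Rightarrow> ('g \<Rightarrow> 'g \<Rightarrow> 'g) \<Rightarrow> ('g \<Rightarrow> 'g) \<Rightarrow> 'g set \<Rightarrow> bool" where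
  "subgroupoid r d m i H \<longleftrightarrow>
     (\<forall>x\<in>H. \<forall>y\<in>H. d x = r y \<longrightarrow> m x y \<in> H) \<and> (\<forall>x\<in>H. i x \<in> H)"

text \<open>The restriction r : D \<rightarrow> r(D) is an open map when r(D) carries the quotient
 topology induced by r restricted to D (a set W \<subseteq> r(D) is open iff D \<inter> r^{-1}(W)
 is open in D).\<close>
definition regular_inclusion :: "('g::topological_space \<Rightarrow> 'g) \<Rightarrow> 'g set \<Rightarrow> bool" where
  "regular_inclusion r D \<longleftrightarrow>
     (\<forall>V. openin (top_of_set D) V \<longrightarrow> openin (top_of_set D) (D \<inter> r -` (r ` V)))"

end

theory Submission
  imports Defs
begin

text \<open>Let \<open>\<Delta> = G - G'\<close> and let \<open>(x, y) \<in> \<Delta>\<^sup>2\<close> with \<open>z = x y \<notin> G'\<close>. Since \<open>z\<inverse> z = d z\<close> is a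
  unit, hence in the open set \<open>G'\<close>, continuity of \<open>(g, v) \<mapsto> g\<inverse> v\<close> gives an open \<open>U \<ni> z\<close> with
  \<open>g\<inverse> v \<in> G'\<close> for all \<open>g, v \<in> U\<close> with \<open>r g = r v\<close>. By regularity, the arrows of \<open>\<Delta>\<close> whose range
  lies in \<open>r(\<Delta> \<inter> U)\<close> form a relatively open neighbourhood of \<open>x\<close> in \<open>\<Delta>\<close>. If \<open>(a, b) \<in> \<Delta>\<^sup>2\<close> has
  \<open>a\<close> in it and \<open>a b \<in> U\<close>, pick \<open>v \<in> \<Delta> \<inter> U\<close> with \<open>r v = r a = r (a b)\<close>; were \<open>a b \<in> G'\<close>, then
  \<open>v = (a b) ((a b)\<inverse> v) \<in> G'\<close>, which is absurd. So these pairs form a neighbourhood of \<open>(x, y)\<close>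
  in \<open>\<Delta>\<^sup>2\<close> avoiding \<open>\<mu>\<inverse>(G')\<close>.\<close>

lemma groupoid_mult_inverse_cancel:
  assumes "groupoid r d m i" and "r g = r v"
  shows "m g (m (i g) v) = v"
proof -
  have "m g (m (i g) v) = m (m g (i g)) v"
    using assms unfolding groupoid_def by metis
  also have "\<dots> = m (r v) v"
    using assms unfolding groupoid_def by metis
  also have "\<dots> = v"
    using assms(1) unfolding groupoid_def by metis
  finally show ?thesis .
qed

lemma subgroupoid_cancel_mem:
  assumes "groupoid r d m i" and "subgroupoid r d m i H"
    and "g \<in> H" and "m (i g) v \<in> H" and "r g = r v"
  shows "v \<in> H"
proof -
  have "d g = r (m (i g) v)"
    using assms(1,5) unfolding groupoid_def by metis
  then have "m g (m (i g) v) \<in> H"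
    using assms(2-4) unfolding subgroupoid_def by blast
  then show ?thesis
    using groupoid_mult_inverse_cancel[OF assms(1,5)] by simp
qed

lemma continuous_on_inverse_mult:
  assumes "topological_groupoid r d m i"
  shows "continuous_on {p. r (fst p) = r (snd p)} (\<lambda>p. m (i (fst p)) (snd p))"
proof -
  have mult: "continuous_on (composable r d) (\<lambda>p. m (fst p) (snd p))"
    and inv: "continuous_on UNIV i" and grp: "groupoid r d m i"
    using assms unfolding topological_groupoid_def by auto
  have "continuous_on {p. r (fst p) = r (snd p)} (\<lambda>p. (i (fst p), snd p))"
    by (intro continuous_intros continuous_on_compose2[OF inv]) auto
  moreover have "(\<lambda>p. (i (fst p), snd p)) ` {p. r (fst p) = r (snd p)} \<subseteq> composable r d"
    using grp by (auto simp: groupoid_def composable_def)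
  ultimately show ?thesis
    using continuous_on_compose2[OF mult] by fastforce
qed

lemma open_nhd_inverse_mult_in_open_subset:
  assumes "topological_groupoid r d m i" and "open H" and "units r \<subseteq> H"
  obtains U where "open U" and "z \<in> U"
    and "\<And>g v. g \<in> U \<Longrightarrow> v \<in> U \<Longrightarrow> r g = r v \<Longrightarrow> m (i g) v \<in> H"
proof -
  obtain A where A: "open A"
    "A \<inter> {p. r (fst p) = r (snd p)} = (\<lambda>p. m (i (fst p)) (snd p)) -` H \<inter> {p. r (fst p) = r (snd p)}"
    using continuous_on_inverse_mult[OF assms(1)] assms(2)
    unfolding continuous_on_open_invariant by blast
  have "m (i z) z = d z" and "d z = r (d z)"
    using assms(1) unfolding topological_groupoid_def groupoid_def by auto
  then have "m (i z) z \<in> H"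
    using assms(3) unfolding units_def by auto
  then have "(z, z) \<in> A"
    using A(2) by auto
  then obtain U1 U2 where "open U1" "open U2" "z \<in> U1" "z \<in> U2" "U1 \<times> U2 \<subseteq> A"
    using open_prod_elim[OF A(1)] by (metis mem_Sigma_iff)
  show ?thesis
  proof (rule that[of "U1 \<inter> U2"])
    fix g v assume "g \<in> U1 \<inter> U2" "v \<in> U1 \<inter> U2" "r g = r v"
    then have "(g, v) \<in> A \<inter> {p. r (fst p) = r (snd p)}"
      using \<open>U1 \<times> U2 \<subseteq> A\<close> by auto
    then show "m (i g) v \<in> H"
      by (subst (asm) A(2)) simp
  qed (use \<open>open U1\<close> \<open>open U2\<close> \<open>z \<in> U1\<close> \<open>z \<in> U2\<close> in auto)
qed

lemma regular_inclusion_saturation: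
  assumes "regular_inclusion r D" and "open U"
  obtains Q where "open Q" and "D \<inter> r -` r ` (D \<inter> U) = D \<inter> Q"
proof -
  have "openin (top_of_set D) (D \<inter> U)"
    using assms(2) by (auto simp: openin_open)
  then have "openin (top_of_set D) (D \<inter> r -` r ` (D \<inter> U))"
    using assms(1) unfolding regular_inclusion_def by blast
  then show ?thesis
    using that unfolding openin_open by blast
qed

lemma mult_notin_subgroupoid:
  assumes "groupoid r d m i" and "subgroupoid r d m i H"
    and U: "\<And>g v. g \<in> U \<Longrightarrow> v \<in> U \<Longrightarrow> r g = r v \<Longrightarrow> m (i g) v \<in> H"
    and "a \<in> r -` r ` (- H \<inter> U)" and "d a = r b" and "m a b \<in> U"
  shows "m a b \<notin> H"
proof
  assume ab: "m a b \<in> H"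
  obtain v where v: "v \<in> U" "v \<notin> H" "r a = r v"
    using assms(4) by auto
  have "r (m a b) = r v"
    using assms(1,5) v(3) unfolding groupoid_def by metis
  with assms(6) v(1) have "m (i (m a b)) v \<in> H"
    using U by blast
  with ab v(2) show False
    using subgroupoid_cancel_mem[OF assms(1,2)] \<open>r (m a b) = r v\<close> by blast
qed

lemma open_nhd_composable_mult_notin_subgroupoid:
  assumes "topological_groupoid r d m i"
    and "subgroupoid r d m i H" and "open H" and "units r \<subseteq> H"
    and "regular_inclusion r (- H)"
    and "x \<notin> H" and "d x = r y" and "m x y \<notin> H"
  obtains W where "open W" and "(x, y) \<in> W"
    and "\<And>a b. (a, b) \<in> W \<Longrightarrow> a \<notin> H \<Longrightarrow> d a = r b \<Longrightarrow> m a b \<notin> H"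
proof -
  have grp: "groupoid r d m i"
    and mult: "continuous_on (composable r d) (\<lambda>p. m (fst p) (snd p))"
    using assms(1) unfolding topological_groupoid_def by auto
  obtain U where U: "open U" "m x y \<in> U"
    and U_inverse_mult: "\<And>g v. g \<in> U \<Longrightarrow> v \<in> U \<Longrightarrow> r g = r v \<Longrightarrow> m (i g) v \<in> H"
    using open_nhd_inverse_mult_in_open_subset[OF assms(1,3,4)] by metis
  obtain Q where Q: "open Q" "- H \<inter> r -` r ` (- H \<inter> U) = - H \<inter> Q"
    using regular_inclusion_saturation[OF assms(5) U(1)] by metis
  obtain P where P: "open P"
    "P \<inter> composable r d = (\<lambda>p. m (fst p) (snd p)) -` U \<inter> composable r d"
    using mult U(1) unfolding continuous_on_open_invariant by blast
  show ?thesis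
  proof (rule that[of "Q \<times> UNIV \<inter> P"])
    show "open (Q \<times> UNIV \<inter> P)"
      using Q(1) P(1) by (intro open_Int open_Times) auto
    have "r (m x y) = r x"
      using grp assms(7) unfolding groupoid_def by auto
    then have "x \<in> - H \<inter> r -` r ` (- H \<inter> U)"
      using assms(6,8) U(2) by (metis ComplI IntI image_eqI vimageI)
    then show "(x, y) \<in> Q \<times> UNIV \<inter> P"
      using assms(7) P(2) Q(2) U(2) by (auto simp: composable_def)
  next
    fix a b assume ab: "(a, b) \<in> Q \<times> UNIV \<inter> P" "a \<notin> H" "d a = r b"
    then have "a \<in> r -` r ` (- H \<inter> U)"
      using Q(2) by blast
    moreover have "(a, b) \<in> P \<inter> composable r d"
      using ab by (auto simp: composable_def)
    then have "m a b \<in> U"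
      unfolding P(2) by simp
    ultimately show "m a b \<notin> H"
      using mult_notin_subgroupoid[OF grp assms(2) U_inverse_mult] ab(3) by blast
  qed
qed

lemma closedin_composable_complement_mult_in:
  assumes "topological_groupoid r d m i"
    and "subgroupoid r d m i H" and "open H" and "units r \<subseteq> H"
    and "regular_inclusion r (- H)"
  shows "closedin (top_of_set (((- H) \<times> (- H)) \<inter> composable r d))
           (((- H) \<times> (- H)) \<inter> composable r d \<inter> {p. m (fst p) (snd p) \<in> H})"
    (is "closedin (top_of_set ?S) ?T")
proof -
  have "openin (top_of_set ?S) (?S - ?T)"
  proof (subst openin_subopen, intro ballI)
    fix p assume p: "p \<in> ?S - ?T"
    obtain x y where xy: "p = (x, y)" by (cases p)
    have "x \<notin> H" "d x = r y" "m x y \<notin> H"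
      using p by (auto simp: xy composable_def)
    then obtain W where W: "open W" "(x, y) \<in> W"
      and W_mult: "\<And>a b. (a, b) \<in> W \<Longrightarrow> a \<notin> H \<Longrightarrow> d a = r b \<Longrightarrow> m a b \<notin> H"
      using open_nhd_composable_mult_notin_subgroupoid[OF assms] by blast
    have "openin (top_of_set ?S) (?S \<inter> W)"
      using W(1) by (rule openin_open_Int)
    moreover have "p \<in> ?S \<inter> W"
      using p W(2) by (simp add: xy)
    moreover have "?S \<inter> W \<subseteq> ?S - ?T"
    proof
      fix q assume q: "q \<in> ?S \<inter> W"
      obtain a b where ab: "q = (a, b)" by (cases q)
      have "m a b \<notin> H"
        using q W_mult by (simp add: ab composable_def)
      then show "q \<in> ?S - ?T"
        using q by (simp add: ab)
    qed
    ultimately show "\<exists>V. openin (top_of_set ?S) V \<and> p \<in> V \<and> V \<subseteq> ?S - ?T"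
      by blast
  qed
  then show ?thesis
    unfolding closedin_def by auto
qed

theorem lemma6p35:
  fixes r d :: "'g::{t2_space, second_countable_topology} \<Rightarrow> 'g"
    and m :: "'g \<Rightarrow> 'g \<Rightarrow> 'g" and i :: "'g \<Rightarrow> 'g"
    and lam :: "'g \<Rightarrow> 'g measure" and G' :: "'g set"
  assumes "topological_groupoid r d m i"
    and "locally_compact_space (euclidean :: 'g topology)"
    and "haar_system r d m lam"
    and "subgroupoid r d m i G'" and "open G'" and "units r \<subseteq> G'"
    and "regular_inclusion r (- G')"
  shows "closedin (top_of_set (((- G') \<times> (- G')) \<inter> composable r d))
           (((- G') \<times> (- G')) \<inter> composable r d \<inter> {p. m (fst p) (snd p) \<in> G'})"
  using closedin_composable_complement_mult_in[OF assms(1,4-7)] .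

end
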